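(* Let $t\ge 0$ be an integer and consider any complete run of the exponential-edge chip-firing process starting with $2^{t+2}$ chips at site $0$. For $0\le k\le t$, site $k$ fires exactly $2$ more times than site $k+1$. Similarly, for $-t\le k\le 0$, site $k$ fires exactly $2$ more times than site $k-1$.
   Context: Exponential-edge graph with parameter $t$: the vertex set is $\mathbb{Z}$; for each $0\le k\le t$ there are $2^{t-k}$ parallel edges between $k$ and $k+1$ and $2^{t-k}$ parallel edges between $-k$ and $-k-1$; all other pairs of adjacent integers ($i,i+1$ with $i\ge t+1$ or $i+1\le -t-1$) are joined by a single edge. If a site has $a$ edges to its left neighbor and $b$ edges to its right neighbor, a firing move at that site chooses $a+b$ chips present there and sends the $a$ smallest of them to the left neighbor and the $b$ largest to the right neighbor (chips carry distinct labels from a totally ordered set). A complete run is a sequence of legal firing moves ending in a configuration where no firing move is possible. *)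

theory Defs
  imports Main
begin

text \<open>Number of parallel edges between sites i and i+1 in the exponential-edge
graph with parameter t.\<close>
definition edges :: "nat \<Rightarrow> int \<Rightarrow> nat" where
  "edges t i =
    (if 0 \<le> i \<and> i \<le> int t then 2 ^ nat (int t - i)
     else if - int t - 1 \<le> i \<and> i < 0 then 2 ^ nat (int t + 1 + i)
     else 1)"

definition ldeg :: "nat \<Rightarrow> int \<Rightarrow> nat" where
  "ldeg t v = edges t (v - 1)"

definition rdeg :: "nat \<Rightarrow> int \<Rightarrow> nat" where
  "rdeg t v = edges t v"

definition smallest :: "nat \<Rightarrow> 'a::linorder set \<Rightarrow> 'a set" where
  "smallest a S = {x \<in> S. card {y \<in> S. y < x} < a}"

definition largest :: "nat \<Rightarrow> 'a::linorder set \<Rightarrow> 'a set" where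
  "largest b S = {x \<in> S. card {y \<in> S. x < y} < b}"

text \<open>A configuration assigns to each site the set of (labels of) chips there.\<close>
type_synonym 'a config = "int \<Rightarrow> 'a set"

definition legal_move :: "nat \<Rightarrow> 'a config \<Rightarrow> int \<Rightarrow> 'a set \<Rightarrow> bool" where
  "legal_move t c v S \<longleftrightarrow> finite (c v) \<and> S \<subseteq> c v \<and> card S = ldeg t v + rdeg t v"

definition fire :: "nat \<Rightarrow> 'a::linorder config \<Rightarrow> int \<Rightarrow> 'a set \<Rightarrow> 'a config" where
  "fire t c v S =
     (c(v := c v - S))
       (v - 1 := c (v - 1) \<union> smallest (ldeg t v) S,
        v + 1 := c (v + 1) \<union> largest (rdeg t v) S)"

fun legal_run :: "nat \<Rightarrow> 'a::linorder config \<Rightarrow> (int \<times> 'a set) list \<Rightarrow> bool" where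
  "legal_run t c [] = True"
| "legal_run t c ((v, S) # ms) = (legal_move t c v S \<and> legal_run t (fire t c v S) ms)"

fun final_config :: "nat \<Rightarrow> 'a::linorder config \<Rightarrow> (int \<times> 'a set) list \<Rightarrow> 'a config" where
  "final_config t c [] = c"
| "final_config t c ((v, S) # ms) = final_config t (fire t c v S) ms"

definition stable :: "nat \<Rightarrow> 'a config \<Rightarrow> bool" where
  "stable t c \<longleftrightarrow> (\<forall>v. \<not> (\<exists>S. legal_move t c v S))"

definition complete_run :: "nat \<Rightarrow> 'a::linorder config \<Rightarrow> (int \<times> 'a set) list \<Rightarrow> bool" where
  "complete_run t c ms \<longleftrightarrow> legal_run t c ms \<and> stable t (final_config t c ms)"

definition fires :: "(int \<times> 'a set) list \<Rightarrow> int \<Rightarrow> nat" where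
  "fires ms v = length (filter (\<lambda>m. fst m = v) ms)"

end

theory Submission
  imports Defs "HOL-Library.Disjoint_Sets"
begin

text \<open>
  Let \<open>F v\<close> be the number of firings at site \<open>v\<close> in the run and let \<open>u\<close> be the odometer
  \<open>u v = 2 (t + 1 - \<bar>v\<bar>) + 1\<close> for \<open>\<bar>v\<bar> \<le> t + 1\<close>, \<open>u v = 0\<close> otherwise. Firing every site
  \<open>v\<close> exactly \<open>u v\<close> times would turn the initial pile into a stable chip count, so by the least
  action principle \<open>F \<le> u\<close>. The defect \<open>p = u - F\<close> is thus nonnegative and vanishes for
  \<open>\<bar>v\<bar> \<ge> t + 2\<close>, and stability of the final configuration, whose chip counts depend only on
  \<open>F\<close>, becomes \<open>3 p k \<le> 2 p (k - 1) + p (k + 1)\<close> for \<open>1 \<le> k \<le> t\<close>,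
  \<open>2 p (t + 1) \<le> p t\<close> (and their mirror images) and \<open>2 p 0 \<le> p (-1) + p 1 + 1\<close>.
  The first two make \<open>p\<close> nonincreasing on \<open>0..t+1\<close> and force \<open>p = 0\<close> there once
  \<open>p 1 = p 0\<close>; the last one forces \<open>p 1 = p 0\<close> or \<open>p (-1) = p 0\<close>. Hence \<open>F = u\<close>.
\<close>

definition rank :: "'a::linorder set \<Rightarrow> 'a \<Rightarrow> nat" where
  "rank S x = card {y \<in> S. y < x}"

lemma rank_plus_card_greater:
  fixes S :: "'a::linorder set"
  assumes "finite S" "x \<in> S"
  shows "rank S x + card {y \<in> S. x < y} + 1 = card S"
proof -
  let ?L = "{y \<in> S. y < x}" and ?G = "{y \<in> S. x < y}"
  have "card (?L \<union> ?G) = card ?L + card ?G"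
    using assms(1) by (intro card_Un_disjoint) auto
  then have "card (insert x (?L \<union> ?G)) = Suc (card ?L + card ?G)"
    using assms(1) by (simp add: card_insert_disjoint)
  moreover have "insert x (?L \<union> ?G) = S"
    using assms(2) by auto
  ultimately show ?thesis
    by (simp add: rank_def)
qed

lemma bij_betw_rank:
  fixes S :: "'a::linorder set"
  assumes "finite S"
  shows "bij_betw (rank S) S {..<card S}"
proof -
  have "strict_mono_on S (rank S)"
  proof (rule strict_mono_onI)
    fix x y assume "x \<in> S" "y \<in> S" "x < y"
    then have "{z \<in> S. z < x} \<subset> {z \<in> S. z < y}" by auto
    then show "rank S x < rank S y"
      unfolding rank_def using assms by (simp add: psubset_card_mono)
  qed
  then have inj: "inj_on (rank S) S" by (rule strict_mono_on_imp_inj_on)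
  moreover have "rank S ` S \<subseteq> {..<card S}"
    using rank_plus_card_greater[OF assms] by fastforce
  moreover have "card (rank S ` S) = card {..<card S}"
    using inj by (simp add: card_image)
  ultimately show ?thesis
    by (simp add: bij_betw_def card_subset_eq)
qed

lemma card_rank_Collect:
  fixes S :: "'a::linorder set"
  assumes "finite S"
  shows "card {x \<in> S. P (rank S x)} = card {i \<in> {..<card S}. P i}"
  by (rule bij_betw_same_card, rule bij_betw_Collect[OF bij_betw_rank[OF assms]]) simp

lemma card_smallest:
  fixes S :: "'a::linorder set"
  assumes "finite S" "a \<le> card S"
  shows "card (smallest a S) = a"
proof -
  have "smallest a S = {x \<in> S. rank S x < a}"
    by (simp add: smallest_def rank_def)
  then have "card (smallest a S) = card {i \<in> {..<card S}. i < a}"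
    using card_rank_Collect[OF assms(1)] by simp
  also have "{i \<in> {..<card S}. i < a} = {..<a}"
    using assms(2) by auto
  finally show ?thesis by simp
qed

lemma card_largest:
  fixes S :: "'a::linorder set"
  assumes "finite S" "b \<le> card S"
  shows "card (largest b S) = b"
proof -
  have "largest b S = {x \<in> S. card S - b \<le> rank S x}"
    unfolding largest_def
  proof (intro Collect_cong conj_cong refl)
    fix x assume "x \<in> S"
    show "card {y \<in> S. x < y} < b \<longleftrightarrow> card S - b \<le> rank S x"
      using rank_plus_card_greater[OF assms(1) \<open>x \<in> S\<close>] assms(2) by linarith
  qed
  then have "card (largest b S) = card {i \<in> {..<card S}. card S - b \<le> i}"
    using card_rank_Collect[OF assms(1)] by simp
  also have "{i \<in> {..<card S}. card S - b \<le> i} = {card S - b..<card S}"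
    by auto
  finally show ?thesis using assms(2) by simp
qed

lemma smallest_disjoint_largest:
  fixes S :: "'a::linorder set"
  assumes "finite S" "card S = a + b"
  shows "smallest a S \<inter> largest b S = {}"
proof -
  have False if "x \<in> smallest a S" "x \<in> largest b S" for x
    using that rank_plus_card_greater[OF assms(1), of x] assms(2)
    unfolding smallest_def largest_def rank_def by auto
  then show ?thesis by blast
qed

definition proper_config :: "'a config \<Rightarrow> bool" where
  "proper_config c \<longleftrightarrow> (\<forall>v. finite (c v)) \<and> disjoint_family c"

text \<open>The change of the number of chips at \<open>w\<close> when every site \<open>x\<close> fires \<open>u x\<close> times:
  \<open>ldeg t w = rdeg t (w - 1)\<close> edges join \<open>w - 1\<close> and \<open>w\<close>.\<close>
definition net_inflow :: "nat \<Rightarrow> (int \<Rightarrow> int) \<Rightarrow> int \<Rightarrow> int" where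
  "net_inflow t u w = int (ldeg t w) * (u (w - 1) - u w) + int (rdeg t w) * (u (w + 1) - u w)"

lemma net_inflow_add: "net_inflow t (\<lambda>x. u x + u' x) w = net_inflow t u w + net_inflow t u' w"
  by (simp add: net_inflow_def algebra_simps)

lemma net_inflow_diff: "net_inflow t (\<lambda>x. u x - u' x) w = net_inflow t u w - net_inflow t u' w"
  by (simp add: net_inflow_def algebra_simps)

lemma net_inflow_single:
  "net_inflow t (\<lambda>x. of_bool (x = v)) w =
     (if w = v then - int (ldeg t v + rdeg t v)
      else if w = v - 1 then int (ldeg t v)
      else if w = v + 1 then int (rdeg t v) else 0)"
  by (auto simp: net_inflow_def ldeg_def rdeg_def)

lemma mem_fire:
  assumes "proper_config c" "S \<subseteq> c v"
  shows "x \<in> fire t c v S u \<longleftrightarrow> x \<in> c u - S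
    \<or> (u = v - 1 \<and> x \<in> smallest (ldeg t v) S) \<or> (u = v + 1 \<and> x \<in> largest (rdeg t v) S)"
proof -
  have "c u \<inter> S = {}" if "u \<noteq> v"
    using assms that unfolding proper_config_def disjoint_family_on_def by blast
  then show ?thesis
    using assms(2) by (auto simp: fire_def smallest_def largest_def)
qed

lemma proper_config_fire:
  assumes "proper_config c" "legal_move t c v S"
  shows "proper_config (fire t c v S)"
proof -
  have S: "S \<subseteq> c v" "finite S" "card S = ldeg t v + rdeg t v"
    using assms(2) finite_subset unfolding legal_move_def by auto
  have "finite (fire t c v S u)" for u
    using assms(1) unfolding proper_config_def fire_def by (auto simp: smallest_def largest_def S)
  moreover have "fire t c v S u \<inter> fire t c v S w = {}" if "u \<noteq> w" for u w
    using that assms(1) smallest_disjoint_largest[OF S(2,3)]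
    unfolding mem_fire[OF assms(1) S(1)] disjoint_iff proper_config_def disjoint_family_on_def
    by (auto simp: smallest_def largest_def)
  ultimately show ?thesis
    unfolding proper_config_def disjoint_family_on_def by blast
qed

lemma card_fire:
  assumes "proper_config c" "legal_move t c v S"
  shows "int (card (fire t c v S w)) = int (card (c w)) + net_inflow t (\<lambda>x. of_bool (x = v)) w"
proof -
  let ?A = "smallest (ldeg t v) S" and ?B = "largest (rdeg t v) S"
  have S: "S \<subseteq> c v" "finite S" "card S = ldeg t v + rdeg t v"
    using assms(2) finite_subset unfolding legal_move_def by auto
  have fin: "finite (c u)" for u
    using assms(1) by (simp add: proper_config_def)
  have disj: "c u \<inter> S = {}" if "u \<noteq> v" for u
    using assms(1) S(1) that unfolding proper_config_def disjoint_family_on_def by blast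
  have "?A \<subseteq> S" "?B \<subseteq> S"
    by (auto simp: smallest_def largest_def)
  then have "card (c (v - 1) \<union> ?A) = card (c (v - 1)) + card ?A"
    "card (c (v + 1) \<union> ?B) = card (c (v + 1)) + card ?B"
    using disj[of "v - 1"] disj[of "v + 1"] fin S(2)
    by (auto intro!: card_Un_disjoint intro: finite_subset)
  moreover have "card ?A = ldeg t v" "card ?B = rdeg t v"
    using S by (simp_all add: card_smallest card_largest)
  moreover have "card (c v - S) = card (c v) - card S" "card S \<le> card (c v)"
    using S(1,2) fin by (simp_all add: card_Diff_subset card_mono)
  ultimately show ?thesis
    using S(3) by (auto simp: fire_def net_inflow_single)
qed

lemma fires_Cons: "fires ((v, S) # ms) x = of_bool (x = v) + fires ms x"
  by (simp add: fires_def)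

lemma proper_config_final_config:
  "legal_run t c ms \<Longrightarrow> proper_config c \<Longrightarrow> proper_config (final_config t c ms)"
  by (induction t c ms rule: legal_run.induct) (auto simp: proper_config_fire)

lemma card_final_config:
  "legal_run t c ms \<Longrightarrow> proper_config c \<Longrightarrow>
     int (card (final_config t c ms w)) = int (card (c w)) + net_inflow t (\<lambda>x. int (fires ms x)) w"
proof (induction t c ms rule: legal_run.induct)
  case (1 t c)
  then show ?case by (simp add: fires_def net_inflow_def)
next
  case (2 t c v S ms)
  then show ?case
    by (simp add: card_fire proper_config_fire fires_Cons net_inflow_add)
qed

lemma least_action_principle:
  assumes "legal_run t c ms" "proper_config c" "\<forall>x. 0 \<le> u x"
    and "\<forall>x. int (card (c x)) + net_inflow t u x < int (ldeg t x + rdeg t x)"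
  shows "int (fires ms w) \<le> u w"
  using assms
proof (induction t c ms arbitrary: u rule: legal_run.induct)
  case (1 t c)
  then show ?case by (simp add: fires_def)
next
  case (2 t c v S ms)
  have move: "legal_move t c v S" and run: "legal_run t (fire t c v S) ms"
    using "2.prems"(1) by simp_all
  have "0 < u v"
  proof (rule ccontr)
    assume "\<not> 0 < u v"
    then have "u v = 0"
      using "2.prems"(3) by (meson antisym not_less)
    then have "0 \<le> net_inflow t u v"
      using "2.prems"(3) by (simp add: net_inflow_def)
    moreover have "ldeg t v + rdeg t v \<le> card (c v)"
      using move card_mono unfolding legal_move_def by metis
    ultimately show False
      using "2.prems"(4)[rule_format, of v] by linarith
  qed
  \<comment> \<open>Firing at \<open>v\<close> uses up one unit of the budget \<open>u\<close> and leaves the chip counts of the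
    target configuration unchanged.\<close>
  define u' where "u' x = u x - of_bool (x = v)" for x
  have "\<forall>x. 0 \<le> u' x"
    using \<open>0 < u v\<close> "2.prems"(3) by (simp add: u'_def)
  moreover have "\<forall>x. int (card (fire t c v S x)) + net_inflow t u' x < int (ldeg t x + rdeg t x)"
    using "2.prems"(2,4) move unfolding u'_def by (simp add: card_fire net_inflow_diff)
  ultimately have "int (fires ms w) \<le> u' w"
    using "2.IH" run "2.prems"(2) move proper_config_fire by blast
  then show ?case
    by (simp add: fires_Cons u'_def)
qed

lemma stable_card_less:
  assumes "stable t c" "finite (c w)"
  shows "card (c w) < ldeg t w + rdeg t w"
proof (rule ccontr)
  assume "\<not> ?thesis"
  then obtain S where "S \<subseteq> c w" "card S = ldeg t w + rdeg t w"
    by (meson not_less obtain_subset_with_card_n)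
  then show False
    using assms unfolding stable_def legal_move_def by blast
qed

lemma rdeg_interior: "0 \<le> w \<Longrightarrow> w \<le> int t \<Longrightarrow> rdeg t w = 2 ^ nat (int t - w)"
  by (simp add: rdeg_def edges_def)

lemma ldeg_interior:
  assumes "1 \<le> w" "w \<le> int t"
  shows "ldeg t w = 2 * rdeg t w"
proof -
  have "nat (int t - (w - 1)) = Suc (nat (int t - w))"
    using assms(2) by simp
  then show ?thesis
    using assms by (simp add: ldeg_def rdeg_def edges_def)
qed

lemma ldeg_zero: "ldeg t 0 = rdeg t 0"
  by (simp add: ldeg_def rdeg_def edges_def)

lemma degrees_exterior: "int t < \<bar>w\<bar> \<Longrightarrow> ldeg t w = 1 \<and> rdeg t w = 1"
  by (auto simp: ldeg_def rdeg_def edges_def)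

lemma ldeg_uminus: "ldeg t (- w) = rdeg t w"
  by (auto simp: ldeg_def rdeg_def edges_def)

lemma net_inflow_uminus: "net_inflow t u (- w) = net_inflow t (\<lambda>x. u (- x)) w"
proof -
  have "- w - 1 = - (w + 1)" "- w + 1 = - (w - 1)"
    by simp_all
  then show ?thesis
    using ldeg_uminus[of t w] ldeg_uminus[of t "- w"]
    by (simp only: net_inflow_def minus_minus add.commute)
qed

definition odometer :: "nat \<Rightarrow> int \<Rightarrow> int" where
  "odometer t v = (if \<bar>v\<bar> \<le> int t + 1 then 2 * (int t + 1 - \<bar>v\<bar>) + 1 else 0)"

definition pile :: "nat \<Rightarrow> int \<Rightarrow> int" where
  "pile t w = (if w = 0 then 2 ^ (t + 2) else 0)"

definition stabilizes_pile :: "nat \<Rightarrow> (int \<Rightarrow> int) \<Rightarrow> bool" where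
  "stabilizes_pile t u \<longleftrightarrow>
     (\<forall>w. pile t w + net_inflow t u w < int (ldeg t w + rdeg t w))"

lemma odometer_uminus: "odometer t (- v) = odometer t v"
  by (simp add: odometer_def)

lemma stabilizes_pile_uminus:
  assumes "stabilizes_pile t u"
  shows "stabilizes_pile t (\<lambda>x. u (- x))"
  unfolding stabilizes_pile_def
proof
  fix w
  show "pile t w + net_inflow t (\<lambda>x. u (- x)) w < int (ldeg t w + rdeg t w)"
    using assms[unfolded stabilizes_pile_def, rule_format, of "- w"]
      ldeg_uminus[of t w] ldeg_uminus[of t "- w"]
    by (simp add: net_inflow_uminus pile_def)
qed

lemma pile_plus_net_inflow_odometer:
  assumes "0 \<le> w"
  shows "pile t w + net_inflow t (odometer t) w =
    (if 1 \<le> w \<and> w \<le> int t then 2 * int (rdeg t w)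
     else if w = int t + 1 \<or> w = int t + 2 then 1 else 0)"
proof -
  consider "w = 0" | "1 \<le> w \<and> w \<le> int t" | "int t < w"
    using assms by linarith
  then show ?thesis
  proof cases
    case 1
    then show ?thesis
      by (simp add: pile_def net_inflow_def ldeg_zero rdeg_interior odometer_def power_add)
  next
    case 2
    then show ?thesis
      by (simp add: pile_def net_inflow_def ldeg_interior odometer_def)
  next
    case 3
    then show ?thesis
      using degrees_exterior[of t w] by (auto simp: pile_def net_inflow_def odometer_def)
  qed
qed

lemma stabilizes_pile_odometer: "stabilizes_pile t (odometer t)"
proof -
  have right: "pile t w + net_inflow t (odometer t) w
      < int (ldeg t w + rdeg t w)" if w: "0 \<le> w" for w
  proof -
    consider "w = 0" | "1 \<le> w \<and> w \<le> int t" | "int t < w"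
      using w by linarith
    then show ?thesis
    proof cases
      case 1
      then show ?thesis
        using pile_plus_net_inflow_odometer[of 0 t] by (simp add: ldeg_zero rdeg_interior)
    next
      case 2
      then show ?thesis
        using pile_plus_net_inflow_odometer[OF w, of t] by (simp add: ldeg_interior rdeg_interior)
    next
      case 3
      then show ?thesis
        using pile_plus_net_inflow_odometer[OF w, of t] degrees_exterior[of t w] by simp
    qed
  qed
  show ?thesis
    unfolding stabilizes_pile_def
  proof
    fix w :: int
    show "pile t w + net_inflow t (odometer t) w < int (ldeg t w + rdeg t w)"
    proof (cases "0 \<le> w")
      case True
      then show ?thesis by (rule right)
    next
      case False
      then show ?thesis
        using right[of "- w"] ldeg_uminus[of t w] ldeg_uminus[of t "- w"]
        by (simp add: net_inflow_uminus[of t _ w] odometer_uminus pile_def)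
    qed
  qed
qed

lemma stabilizes_pile_odometer_minus:
  assumes "stabilizes_pile t (\<lambda>x. odometer t x - q x)"
  shows "1 \<le> w \<Longrightarrow> w \<le> int t \<Longrightarrow> 3 * q w \<le> 2 * q (w - 1) + q (w + 1)"
    and "2 * q (int t + 1) \<le> q (int t) + q (int t + 2)"
    and "2 * q 0 \<le> q (- 1) + q 1 + 1"
proof -
  have excess: "pile t w + net_inflow t (odometer t) w - net_inflow t q w
      < int (ldeg t w + rdeg t w)" for w
    using assms unfolding stabilizes_pile_def net_inflow_diff by (simp add: algebra_simps)
  show "3 * q w \<le> 2 * q (w - 1) + q (w + 1)" if w: "1 \<le> w" "w \<le> int t" for w
  proof -
    define r where "r = int (rdeg t w)"
    have "r > 0"
      using w by (simp add: r_def rdeg_interior)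
    moreover have "r * (2 + 3 * q w - 2 * q (w - 1) - q (w + 1)) < r * 3"
      using excess[of w] pile_plus_net_inflow_odometer[of w t] w
      by (simp add: r_def net_inflow_def ldeg_interior algebra_simps)
    ultimately show ?thesis
      using mult_less_cancel_left_pos by fastforce
  qed
  show "2 * q (int t + 1) \<le> q (int t) + q (int t + 2)"
    using excess[of "int t + 1"] pile_plus_net_inflow_odometer[of "int t + 1" t]
      degrees_exterior[of t "int t + 1"]
    by (simp add: net_inflow_def add.commute)
  show "2 * q 0 \<le> q (- 1) + q 1 + 1"
  proof -
    define r :: int where "r = 2 ^ t"
    have "r > 0"
      by (simp add: r_def)
    moreover have "r * (2 * q 0 - q (- 1) - q 1) < r * 2"
      using excess[of 0] pile_plus_net_inflow_odometer[of 0 t]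
      by (simp add: r_def net_inflow_def ldeg_zero rdeg_interior algebra_simps)
    ultimately show ?thesis
      using mult_less_cancel_left_pos by fastforce
  qed
qed

context
  fixes P :: "nat \<Rightarrow> int" and t :: nat
  assumes nonneg: "\<And>k. 0 \<le> P k"
    and interior: "\<And>k. 1 \<le> k \<Longrightarrow> k \<le> t \<Longrightarrow> 3 * P k \<le> 2 * P (k - 1) + P (k + 1)"
    and boundary: "2 * P (t + 1) \<le> P t"
begin

lemma defect_Suc_le:
  assumes "k \<le> t"
  shows "P (Suc k) \<le> P k"
  using assms
proof (induction rule: inc_induct)
  case base
  show ?case
    using boundary nonneg[of "Suc t"] by simp
next
  case (step n)
  then show ?case
    using interior[of "Suc n"] by simp
qed

lemma defect_antimono:
  assumes "j \<le> k" "k \<le> t + 1"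
  shows "P k \<le> P j"
  using assms
proof (induction rule: dec_induct)
  case base
  show ?case by simp
next
  case (step n)
  then show ?case
    using defect_Suc_le[of n] by simp
qed

lemma defect_flat_imp_zero:
  assumes "P 1 = P 0"
  shows "P 0 = 0"
proof -
  have "P (Suc k) = P 0 \<and> P k = P 0" if "k \<le> t" for k
    using that
  proof (induction k)
    case 0
    then show ?case using assms by simp
  next
    case (Suc k)
    have "3 * P (Suc k) \<le> 2 * P k + P (Suc (Suc k))"
      using interior[of "Suc k"] Suc.prems by simp
    moreover have "P (Suc (Suc k)) \<le> P (Suc k)"
      using defect_Suc_le Suc.prems by simp
    ultimately show ?case
      using Suc by linarith
  qed
  then have "P (Suc t) = P 0" "P t = P 0"
    using le_refl by blast+
  moreover have "2 * P (Suc t) \<le> P t"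
    using boundary by simp
  ultimately show ?thesis
    using nonneg[of 0] by linarith
qed

end

lemma odometer_defect_one_side:
  assumes "stabilizes_pile t (\<lambda>x. odometer t x - q x)" "\<forall>x. 0 \<le> q x" "q (int t + 2) = 0"
  shows "0 \<le> w \<Longrightarrow> w \<le> int t + 1 \<Longrightarrow> q w \<le> q 0"
    and "q 1 = q 0 \<Longrightarrow> q 0 = 0"
proof -
  let ?P = "\<lambda>k. q (int k)"
  have nonneg: "0 \<le> ?P k" for k
    using assms(2) by simp
  have interior: "3 * ?P k \<le> 2 * ?P (k - 1) + ?P (k + 1)" if "1 \<le> k" "k \<le> t" for k
    using stabilizes_pile_odometer_minus(1)[OF assms(1), of "int k"] that
    by (simp add: of_nat_diff add.commute)
  have boundary: "2 * ?P (t + 1) \<le> ?P t"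
    using stabilizes_pile_odometer_minus(2)[OF assms(1)] assms(3) by (simp add: add.commute)
  show "q w \<le> q 0" if "0 \<le> w" "w \<le> int t + 1"
    using defect_antimono[OF nonneg interior boundary, of 0 "nat w"] that by simp
  show "q 0 = 0" if "q 1 = q 0"
    using defect_flat_imp_zero[OF nonneg interior boundary] that by simp
qed

lemma odometer_defect_eq_zero:
  assumes stab: "stabilizes_pile t (\<lambda>x. odometer t x - p x)"
    and nonneg: "\<forall>x. 0 \<le> p x" and outside: "\<forall>x. int t + 2 \<le> \<bar>x\<bar> \<longrightarrow> p x = 0"
  shows "p x = 0"
proof -
  have "\<forall>x. 0 \<le> p (- x)" "p (int t + 2) = 0" "p (- (int t + 2)) = 0"
    using nonneg outside by simp_all
  moreover have "stabilizes_pile t (\<lambda>x. odometer t x - p (- x))"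
    using stabilizes_pile_uminus[OF stab] by (simp add: odometer_uminus)
  ultimately have
    right: "\<And>w. 0 \<le> w \<Longrightarrow> w \<le> int t + 1 \<Longrightarrow> p w \<le> p 0" "p 1 = p 0 \<Longrightarrow> p 0 = 0" and
    left: "\<And>w. 0 \<le> w \<Longrightarrow> w \<le> int t + 1 \<Longrightarrow> p (- w) \<le> p 0" "p (- 1) = p 0 \<Longrightarrow> p 0 = 0"
    using odometer_defect_one_side[OF stab nonneg] odometer_defect_one_side[of t "\<lambda>x. p (- x)"]
    by simp_all
  have "p 1 = p 0 \<or> p (- 1) = p 0"
    using stabilizes_pile_odometer_minus(3)[OF stab] right(1)[of 1] left(1)[of 1] by linarith
  then have "p 0 = 0"
    using right(2) left(2) by blast
  show ?thesis
  proof (cases "\<bar>x\<bar> \<le> int t + 1")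
    case True
    then have "p x \<le> p 0"
      using right(1)[of x] left(1)[of "- x"] by (cases "0 \<le> x") auto
    then show ?thesis
      using \<open>p 0 = 0\<close> nonneg[rule_format, of x] by simp
  next
    case False
    then show ?thesis
      using outside by simp
  qed
qed

theorem fires_eq_odometer:
  fixes X :: "'a::linorder set"
  assumes "finite X" "card X = 2 ^ (t + 2)"
    and "complete_run t (\<lambda>v. if v = 0 then X else {}) ms"
  shows "int (fires ms w) = odometer t w"
proof -
  let ?c = "\<lambda>v. if v = 0 then X else {}"
  define F where "F x = int (fires ms x)" for x
  have proper: "proper_config ?c"
    using assms(1) by (simp add: proper_config_def disjoint_family_on_def)
  have run: "legal_run t ?c ms" and stable: "stable t (final_config t ?c ms)"
    using assms(3) by (simp_all add: complete_run_def)
  have card_init: "int (card (?c x)) = pile t x" for x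
    using assms(2) by (simp add: pile_def)
  have "\<forall>x. 0 \<le> odometer t x"
    by (simp add: odometer_def)
  moreover have "\<forall>x. int (card (?c x)) + net_inflow t (odometer t) x < int (ldeg t x + rdeg t x)"
    using stabilizes_pile_odometer[of t] unfolding stabilizes_pile_def card_init[symmetric] .
  ultimately have F_le: "F x \<le> odometer t x" for x
    using least_action_principle[OF run proper] by (simp add: F_def)
  have "stabilizes_pile t F"
    unfolding stabilizes_pile_def card_init[symmetric]
  proof
    fix w
    have "finite (final_config t ?c ms w)"
      using proper_config_final_config[OF run proper] by (simp add: proper_config_def)
    then show "int (card (?c w)) + net_inflow t F w < int (ldeg t w + rdeg t w)"
      using card_final_config[OF run proper, of w] stable_card_less[OF stable]
      unfolding F_def by fastforce
  qed
  define p where "p x = odometer t x - F x" for x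
  have "stabilizes_pile t (\<lambda>x. odometer t x - p x)"
    using \<open>stabilizes_pile t F\<close> by (simp add: p_def)
  moreover have "\<forall>x. 0 \<le> p x"
    using F_le by (simp add: p_def)
  moreover have "p x = 0" if "int t + 2 \<le> \<bar>x\<bar>" for x
    using F_le[of x] that by (simp add: p_def F_def odometer_def)
  ultimately have "p w = 0"
    by (intro odometer_defect_eq_zero) auto
  then show ?thesis
    by (simp add: p_def F_def)
qed

theorem lemma3p4:
  fixes t :: nat and X :: "'a::linorder set" and ms :: "(int \<times> 'a set) list"
  assumes "finite X" and "card X = 2 ^ (t + 2)"
    and "complete_run t (\<lambda>v. if v = 0 then X else {}) ms"
  shows "(\<forall>k. 0 \<le> k \<and> k \<le> int t \<longrightarrow> fires ms k = fires ms (k + 1) + 2)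
       \<and> (\<forall>k. - int t \<le> k \<and> k \<le> 0 \<longrightarrow> fires ms k = fires ms (k - 1) + 2)"
proof -
  have od: "int (fires ms w) = odometer t w" for w
    using fires_eq_odometer[OF assms] .
  have "fires ms k = fires ms (k + 1) + 2" if "0 \<le> k" "k \<le> int t" for k
    using od[of k] od[of "k + 1"] that by (simp add: odometer_def)
  moreover have "fires ms k = fires ms (k - 1) + 2" if "- int t \<le> k" "k \<le> 0" for k
    using od[of k] od[of "k - 1"] that by (simp add: odometer_def)
  ultimately show ?thesis
    by blast
qed

end
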